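(* Let $X$ be a normed linear space, $F:X\rightrightarrows\mathbb{R}^p$, $(x,y)\in\mathrm{gph}F$, with $F$ Lipschitz around $x$ and $y\in\mathcal{PE}(F(x),P)$. If $S$ is a nonempty compact subset of $X\times\mathbb{R}^p$, then the set $\mathrm{cl}\Big(\bigcup_{(v,w)\in S}\big(w+D_\uparrow F((x,y);v)\big)\Big)$ is $P$-bounded.
   Context: $P\subset\mathbb{R}^p$ is a closed convex pointed cone containing $0$ with nonempty interior; $F_\uparrow(x)=F(x)+P$. $\mathcal{E}(S,P)=\{y\in S:(y-P)\cap S=\{y\}\}$; contingent cone $T_S(z)=\{v:\exists h_k\to0^+,\exists v_k\to v,z+h_kv_k\in S\}$; $\mathcal{PE}(S,P)=\{y\in\mathcal{E}(S,P):T_{S+P}(y)\cap(-P)=\{0\}\}$. $F$ is Lipschitz around $x$ if there are $l>0$ and a neighborhood $\mathcal{O}$ of $x$ with $F(x_1)\subset F(x_2)+l\|x_1-x_2\|\mathbf{B}$ for $x_1,x_2\in\mathcal{O}$. Contingent derivative $DF(x,y)$: graph $T_{\mathrm{gph}F}(x,y)$, value at $v$ written $DF((x,y);v)$. Generalized contingent epiderivative: $D_\uparrow F((x,y);v)=\mathcal{E}(DF_\uparrow((x,y);v),P)$ (empty if $DF_\uparrow((x,y);v)$ is empty or has no minimal element). Recession cone $A^+=\{z:\exists h_k\to0^+,\exists y_k\in A,h_ky_k\to z\}$; $A$ is $P$-bounded if $A^+\cap(-P)=\{0\}$. *)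

theory Defs
  imports "HOL-Analysis.Analysis"
begin

definition ordering_cone :: "'b::euclidean_space set \<Rightarrow> bool" where
  "ordering_cone P \<longleftrightarrow> closed P \<and> convex P \<and> cone P \<and> 0 \<in> P
     \<and> P \<inter> uminus ` P = {0} \<and> interior P \<noteq> {}"

definition graph :: "('a \<Rightarrow> 'b set) \<Rightarrow> ('a \<times> 'b) set" where
  "graph F = {(x, y). y \<in> F x}"

definition epi_map :: "('a \<Rightarrow> 'b::ab_group_add set) \<Rightarrow> 'b set \<Rightarrow> 'a \<Rightarrow> 'b set" where
  "epi_map F P x = {y + q | y q. y \<in> F x \<and> q \<in> P}"

definition efficient :: "'b::ab_group_add set \<Rightarrow> 'b set \<Rightarrow> 'b set" where
  "efficient S P = {y \<in> S. {y - q | q. q \<in> P} \<inter> S = {y}}"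

definition contingent_cone :: "'a::real_normed_vector set \<Rightarrow> 'a \<Rightarrow> 'a set" where
  "contingent_cone S z = {v. \<exists>h :: nat \<Rightarrow> real. \<exists>vs :: nat \<Rightarrow> 'a.
      (\<forall>k. h k > 0) \<and> h \<longlonglongrightarrow> 0 \<and> vs \<longlonglongrightarrow> v \<and> (\<forall>k. z + h k *\<^sub>R vs k \<in> S)}"

definition proper_efficient :: "'b::real_normed_vector set \<Rightarrow> 'b set \<Rightarrow> 'b set" where
  "proper_efficient S P = {y \<in> efficient S P.
      contingent_cone {s + q | s q. s \<in> S \<and> q \<in> P} y \<inter> uminus ` P = {0}}"

definition lipschitz_around :: "('a::real_normed_vector \<Rightarrow> 'b::real_normed_vector set) \<Rightarrow> 'a \<Rightarrow> bool" where
  "lipschitz_around F x \<longleftrightarrow> (\<exists>l>0. \<exists>U. open U \<and> x \<in> U \<and>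
      (\<forall>x1\<in>U. \<forall>x2\<in>U. F x1 \<subseteq> {a + b | a b. a \<in> F x2 \<and> b \<in> cball 0 (l * norm (x1 - x2))}))"

definition contingent_derivative ::
  "('a::real_normed_vector \<Rightarrow> 'b::real_normed_vector set) \<Rightarrow> 'a \<Rightarrow> 'b \<Rightarrow> 'a \<Rightarrow> 'b set" where
  "contingent_derivative F x y v = {w. (v, w) \<in> contingent_cone (graph F) (x, y)}"

definition gen_contingent_epiderivative ::
  "('a::real_normed_vector \<Rightarrow> 'b::real_normed_vector set) \<Rightarrow> 'b set \<Rightarrow> 'a \<Rightarrow> 'b \<Rightarrow> 'a \<Rightarrow> 'b set" where
  "gen_contingent_epiderivative F P x y v =
     efficient (contingent_derivative (epi_map F P) x y v) P"

definition recession_cone :: "'b::real_normed_vector set \<Rightarrow> 'b set" where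
  "recession_cone A = {z. \<exists>h :: nat \<Rightarrow> real. \<exists>ys :: nat \<Rightarrow> 'b.
      (\<forall>k. h k > 0) \<and> h \<longlonglongrightarrow> 0 \<and> (\<forall>k. ys k \<in> A) \<and> (\<lambda>k. h k *\<^sub>R ys k) \<longlonglongrightarrow> z}"

text \<open>P-bounded: no nonzero recession direction in -P (the empty set counts as P-bounded).\<close>
definition P_bounded :: "'b::real_normed_vector set \<Rightarrow> 'b set \<Rightarrow> bool" where
  "P_bounded A P \<longleftrightarrow> recession_cone A \<inter> uminus ` P \<subseteq> {0}"

end

theory Submission
  imports Defs
begin

(* Let A be the union of the translates w + D_up F((x,y);v), (v,w) in S, and
   let z be a recession direction of cl A lying in -P.  Since the translations w are
   bounded (S is compact), z is already a recession direction of the union B of the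
   contingent-derivative values D(F+P)((x,y);v) over the bounded set of directions v;
   the closure is a bounded perturbation of A as well.  The Lipschitz property of F (hence
   of F+P) shows that a value d of D(F+P)((x,y);v) is, up to an error l*|v|, a difference
   quotient of the fibre F(x)+P at y; rescaling a recession sequence of B kills this
   bounded error, so z is tangent to F(x)+P at y. *)

lemma vanishing_steps_iff:
  fixes v :: "'v::real_normed_vector"
  shows "(\<exists>h vs. (\<forall>k. 0 < h k) \<and> h \<longlonglongrightarrow> 0 \<and> vs \<longlonglongrightarrow> v \<and> (\<forall>k. R (h k) (vs k))) \<longleftrightarrow>
         (\<forall>e>0. \<exists>t u. 0 < t \<and> t < e \<and> norm (u - v) < e \<and> R t u)"
proof
  assume "\<exists>h vs. (\<forall>k. 0 < h k) \<and> h \<longlonglongrightarrow> 0 \<and> vs \<longlonglongrightarrow> v \<and> (\<forall>k. R (h k) (vs k))"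
  then obtain h vs where h: "\<forall>k. 0 < h k" "h \<longlonglongrightarrow> 0" "vs \<longlonglongrightarrow> v" "\<forall>k. R (h k) (vs k)"
    by blast
  show "\<forall>e>0. \<exists>t u. 0 < t \<and> t < e \<and> norm (u - v) < e \<and> R t u"
  proof (intro allI impI)
    fix e :: real assume "e > 0"
    then have "eventually (\<lambda>k. dist (h k) 0 < e) sequentially"
      and "eventually (\<lambda>k. dist (vs k) v < e) sequentially"
      using tendstoD[OF h(2)] tendstoD[OF h(3)] \<open>e > 0\<close> by blast+
    then have "eventually (\<lambda>k. dist (h k) 0 < e \<and> dist (vs k) v < e) sequentially"
      by (rule eventually_conj)
    then obtain k where "dist (h k) 0 < e" "dist (vs k) v < e"
      using eventually_happens'[OF sequentially_bot] by blast
    then show "\<exists>t u. 0 < t \<and> t < e \<and> norm (u - v) < e \<and> R t u"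
      using h(1,4) by (intro exI[of _ "h k"] exI[of _ "vs k"]) (auto simp: dist_norm)
  qed
next
  assume approx: "\<forall>e>0. \<exists>t u. 0 < t \<and> t < e \<and> norm (u - v) < e \<and> R t u"
  have "\<forall>n. \<exists>p. 0 < fst p \<and> fst p < inverse (real (Suc n)) \<and>
                norm (snd p - v) < inverse (real (Suc n)) \<and> R (fst p) (snd p)"
    using approx by auto
  then obtain p where p: "\<And>n. 0 < fst (p n) \<and> fst (p n) < inverse (real (Suc n)) \<and>
      norm (snd (p n) - v) < inverse (real (Suc n)) \<and> R (fst (p n)) (snd (p n))"
    by metis
  have "norm (fst (p n)) \<le> inverse (real (Suc n))" for n
    using p[of n] by (simp del: of_nat_Suc)
  then have "(\<lambda>n. fst (p n)) \<longlonglongrightarrow> 0"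
    by (intro Lim_null_comparison[OF _ LIMSEQ_inverse_real_of_nat] always_eventually) auto
  moreover have "(\<lambda>n. snd (p n) - v) \<longlonglongrightarrow> 0"
    by (rule Lim_null_comparison[OF _ LIMSEQ_inverse_real_of_nat])
       (use p in \<open>auto intro!: always_eventually less_imp_le simp del: of_nat_Suc\<close>)
  then have "(\<lambda>n. snd (p n)) \<longlonglongrightarrow> v" by (rule LIM_zero_cancel)
  ultimately show "\<exists>h vs. (\<forall>k. 0 < h k) \<and> h \<longlonglongrightarrow> 0 \<and> vs \<longlonglongrightarrow> v \<and> (\<forall>k. R (h k) (vs k))"
    using p by (intro exI[of _ "\<lambda>n. fst (p n)"] exI[of _ "\<lambda>n. snd (p n)"]) auto
qed

lemma contingent_cone_iff:
  "v \<in> contingent_cone S z \<longleftrightarrow>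
   (\<forall>e>0. \<exists>t u. 0 < t \<and> t < e \<and> norm (u - v) < e \<and> z + t *\<^sub>R u \<in> S)"
  unfolding contingent_cone_def
  using vanishing_steps_iff[of v "\<lambda>t u. z + t *\<^sub>R u \<in> S"] by simp

text \<open>Epsilon form of the recession cone: \<open>z\<close> is approximated by small multiples of
  elements of \<open>A\<close> (apply the previous lemma to \<open>v\<^sub>k = h\<^sub>k y\<^sub>k\<close>).\<close>
lemma recession_cone_iff:
  "z \<in> recession_cone A \<longleftrightarrow>
   (\<forall>e>0. \<exists>t a. 0 < t \<and> t < e \<and> a \<in> A \<and> norm (t *\<^sub>R a - z) < e)"
proof -
  let ?R = "\<lambda>t u. \<exists>a\<in>A. u = t *\<^sub>R a"
  have sequential: "z \<in> recession_cone A \<longleftrightarrow>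
        (\<exists>h vs. (\<forall>k. 0 < h k) \<and> h \<longlonglongrightarrow> 0 \<and> vs \<longlonglongrightarrow> z \<and> (\<forall>k. ?R (h k) (vs k)))"
  proof
    assume "z \<in> recession_cone A"
    then obtain h ys where "\<forall>k. 0 < h k" "h \<longlonglongrightarrow> 0" "\<forall>k. ys k \<in> A" "(\<lambda>k. h k *\<^sub>R ys k) \<longlonglongrightarrow> z"
      unfolding recession_cone_def by blast
    then show "\<exists>h vs. (\<forall>k. 0 < h k) \<and> h \<longlonglongrightarrow> 0 \<and> vs \<longlonglongrightarrow> z \<and> (\<forall>k. ?R (h k) (vs k))"
      by (intro exI[of _ h] exI[of _ "\<lambda>k. h k *\<^sub>R ys k"]) auto
  next
    assume "\<exists>h vs. (\<forall>k. 0 < h k) \<and> h \<longlonglongrightarrow> 0 \<and> vs \<longlonglongrightarrow> z \<and> (\<forall>k. ?R (h k) (vs k))"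
    then obtain h vs where h: "\<forall>k. 0 < h k" "h \<longlonglongrightarrow> 0" "vs \<longlonglongrightarrow> z" "\<forall>k. ?R (h k) (vs k)"
      by blast
    then obtain ys where ys: "\<And>k. ys k \<in> A \<and> vs k = h k *\<^sub>R ys k" by metis
    then have "vs = (\<lambda>k. h k *\<^sub>R ys k)" by auto
    with h ys show "z \<in> recession_cone A"
      unfolding recession_cone_def by (intro CollectI exI[of _ h] exI[of _ ys]) auto
  qed
  have reform: "(\<exists>t u. 0 < t \<and> t < e \<and> norm (u - z) < e \<and> ?R t u) \<longleftrightarrow>
             (\<exists>t a. 0 < t \<and> t < e \<and> a \<in> A \<and> norm (t *\<^sub>R a - z) < e)" for e
    by blast
  show ?thesis
    by (simp only: sequential vanishing_steps_iff[of z ?R] reform)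
qed

lemma recession_cone_bounded_perturbation:
  assumes M: "0 \<le> M"
    and perturb: "\<And>a. a \<in> A \<Longrightarrow> \<exists>w b. a = w + b \<and> norm w \<le> M \<and> b \<in> B"
  shows "recession_cone A \<subseteq> recession_cone B"
proof
  fix z assume z: "z \<in> recession_cone A"
  show "z \<in> recession_cone B"
    unfolding recession_cone_iff
  proof (intro allI impI)
    fix e :: real assume e: "e > 0"
    define \<delta> where "\<delta> = min (e / 2) (e / (2 * (M + 1)))"
    have "0 < \<delta>" using e M by (simp add: \<delta>_def)
    then obtain t a where ta: "0 < t" "t < \<delta>" "a \<in> A" "norm (t *\<^sub>R a - z) < \<delta>"
      using z unfolding recession_cone_iff by blast
    obtain w b where wb: "a = w + b" "norm w \<le> M" "b \<in> B" using perturb[OF ta(3)] by blast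
    have "t \<le> e / (2 * (M + 1))" using ta(2) by (simp add: \<delta>_def)
    then have "t * (M + 1) \<le> e / 2" using M by (simp add: field_simps)
    moreover have "t \<le> t * (M + 1)" using ta(1) M by simp
    moreover have "\<delta> \<le> e / 2" unfolding \<delta>_def by (rule min.cobounded1)
    moreover have "t * (M + 1) = t * M + t" by (simp add: algebra_simps)
    ultimately have small: "t * M + \<delta> \<le> e" "t < e"
      using e ta(1) by linarith+
    have "norm (t *\<^sub>R b - z) = norm ((t *\<^sub>R a - z) - t *\<^sub>R w)"
      using wb(1) by (simp add: algebra_simps)
    also have "\<dots> \<le> norm (t *\<^sub>R a - z) + norm (t *\<^sub>R w)" by (rule norm_triangle_ineq4)
    also have "\<dots> = norm (t *\<^sub>R a - z) + t * norm w" using ta(1) by simp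
    also have "\<dots> < \<delta> + t * M"
      using ta(1,4) wb(2) mult_left_mono[of "norm w" M t] by linarith
    finally show "\<exists>t b. 0 < t \<and> t < e \<and> b \<in> B \<and> norm (t *\<^sub>R b - z) < e"
      using ta(1) wb(3) small by (intro exI[of _ t] exI[of _ b]) auto
  qed
qed

text \<open>In particular, passing to the closure adds no recession directions (each point of the
  closure is within distance 1 of the set).\<close>
lemma recession_cone_closure_subset: "recession_cone (closure A) \<subseteq> recession_cone A"
proof (rule recession_cone_bounded_perturbation[of 1])
  fix c assume "c \<in> closure A"
  then obtain a where "a \<in> A" "dist a c < 1"
    using closure_approachable[of c A] zero_less_one by blast
  then show "\<exists>w b. c = w + b \<and> norm w \<le> 1 \<and> b \<in> A"
    by (intro exI[of _ "c - a"] exI[of _ a]) (auto simp: dist_norm norm_minus_commute)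
qed simp

lemma lipschitz_around_epi_map:
  assumes "lipschitz_around F x"
  shows "lipschitz_around (epi_map F P) x"
proof -
  obtain l U where "l > 0" "open U" "x \<in> U"
    and LU: "\<And>x1 x2. x1 \<in> U \<Longrightarrow> x2 \<in> U \<Longrightarrow>
               F x1 \<subseteq> {a + b | a b. a \<in> F x2 \<and> b \<in> cball 0 (l * norm (x1 - x2))}"
    using assms unfolding lipschitz_around_def by blast
  have "epi_map F P x1 \<subseteq> {a + b | a b. a \<in> epi_map F P x2 \<and> b \<in> cball 0 (l * norm (x1 - x2))}"
    if "x1 \<in> U" "x2 \<in> U" for x1 x2
  proof
    fix c assume "c \<in> epi_map F P x1"
    then obtain f q where "c = f + q" "f \<in> F x1" "q \<in> P" unfolding epi_map_def by blast
    moreover from this(2) LU[OF that] obtain f' b where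
      "f = f' + b" "f' \<in> F x2" "b \<in> cball 0 (l * norm (x1 - x2))" by blast
    ultimately show "c \<in> {a + b | a b. a \<in> epi_map F P x2 \<and> b \<in> cball 0 (l * norm (x1 - x2))}"
      unfolding epi_map_def by (intro CollectI exI[of _ "f' + q"] exI[of _ b]) (auto simp: algebra_simps)
  qed
  with \<open>l > 0\<close> \<open>open U\<close> \<open>x \<in> U\<close> show ?thesis unfolding lipschitz_around_def by blast
qed

text \<open>One moves the point \<open>y + t c \<in> G (x + t a)\<close> back into the fibre \<open>G x\<close> at cost \<open>l t \<parallel>a\<parallel>\<close>.\<close>
lemma difference_quotient_near_tangent:
  fixes G :: "'a::real_normed_vector \<Rightarrow> 'b::real_normed_vector set"
  assumes l: "0 < l" and r: "0 < r"
    and lip: "\<And>x'. x' \<in> ball x r \<Longrightarrow>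
               G x' \<subseteq> {g + b | g b. g \<in> G x \<and> b \<in> cball 0 (l * norm (x' - x))}"
    and vw: "(v, w) \<in> contingent_cone (graph G) (x, y)" and e: "0 < e"
  shows "\<exists>t u. 0 < t \<and> t < e \<and> norm (u - w) \<le> l * norm v + e \<and> y + t *\<^sub>R u \<in> G x"
proof -
  define \<delta> where "\<delta> = min 1 (min (r / (norm v + 1)) (e / (l + 1)))"
  have pos: "0 < norm v + 1" "0 < l + 1" using l by (smt (verit) norm_ge_zero)+
  have "\<delta> \<le> r / (norm v + 1)" "\<delta> \<le> e / (l + 1)" by (simp_all add: \<delta>_def)
  then have \<delta>: "0 < \<delta>" "\<delta> \<le> 1" "\<delta> * (norm v + 1) \<le> r" "\<delta> * (l + 1) \<le> e"
    using r e pos by (simp_all add: \<delta>_def pos_le_divide_eq)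
  obtain t p where tp: "0 < t" "t < \<delta>" "norm (p - (v, w)) < \<delta>" "(x, y) + t *\<^sub>R p \<in> graph G"
    using vw \<delta>(1) unfolding contingent_cone_iff by blast
  obtain a c where p: "p = (a, c)" by (cases p)
  have na: "norm (a - v) < \<delta>" and nc: "norm (c - w) < \<delta>"
    using tp(3) norm_fst_le[of "a - v" "c - w"] norm_snd_le[of "c - w" "a - v"] p by auto
  have a_le: "norm a \<le> norm v + \<delta>"
    using na norm_triangle_ineq2[of a v] by linarith
  have "t * norm a \<le> t * (norm v + 1)"
    using a_le \<delta>(2) tp(1) by (intro mult_left_mono) auto
  also have "\<dots> < \<delta> * (norm v + 1)"
    using tp(2) pos(1) by (intro mult_strict_right_mono)
  finally have "x + t *\<^sub>R a \<in> ball x r" using \<delta>(3) tp(1) by (simp add: dist_norm)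
  moreover have "y + t *\<^sub>R c \<in> G (x + t *\<^sub>R a)" using tp(4) p by (simp add: graph_def)
  ultimately obtain g b where gb: "y + t *\<^sub>R c = g + b" "g \<in> G x"
      "b \<in> cball 0 (l * norm (x + t *\<^sub>R a - x))"
    using lip by blast
  have nb: "norm b \<le> l * (t * norm a)" using gb(3) tp(1) by simp
  define u where "u = c - (1 / t) *\<^sub>R b"
  have "y + t *\<^sub>R u = g" using gb(1) tp(1) by (simp add: u_def algebra_simps)
  have "norm (u - w) = norm ((c - w) - (1 / t) *\<^sub>R b)" by (simp add: u_def algebra_simps)
  also have "\<dots> \<le> norm (c - w) + (1 / t) * norm b"
    using norm_triangle_ineq4[of "c - w" "(1 / t) *\<^sub>R b"] tp(1) by simp
  also have "(1 / t) * norm b \<le> l * norm a"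
    using mult_left_mono[OF nb, of "1 / t"] tp(1) by simp
  also have "l * norm a \<le> l * (norm v + \<delta>)"
    using a_le l by (simp add: mult_left_mono)
  finally have "norm (u - w) \<le> l * norm v + \<delta> * (l + 1)"
    using nc by (simp add: algebra_simps)
  moreover have "t < e"
    using tp(2) \<delta>(1,4) l mult_left_mono[of 1 "l + 1" \<delta>] by linarith
  ultimately show ?thesis
    using \<open>y + t *\<^sub>R u = g\<close> gb(2) tp(1) \<delta>(4) by (intro exI[of _ t] exI[of _ u]) auto
qed

lemma lipschitz_difference_quotient:
  fixes G :: "'a::real_normed_vector \<Rightarrow> 'b::real_normed_vector set"
  assumes "lipschitz_around G x"
  obtains l where "l > 0"
    and "\<And>v w e. (v, w) \<in> contingent_cone (graph G) (x, y) \<Longrightarrow> 0 < e \<Longrightarrow>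
           \<exists>t u. 0 < t \<and> t < e \<and> norm (u - w) \<le> l * norm v + e \<and> y + t *\<^sub>R u \<in> G x"
proof -
  obtain l U where l: "l > 0" "open U" "x \<in> U"
    and LU: "\<And>x1 x2. x1 \<in> U \<Longrightarrow> x2 \<in> U \<Longrightarrow>
               G x1 \<subseteq> {a + b | a b. a \<in> G x2 \<and> b \<in> cball 0 (l * norm (x1 - x2))}"
    using assms unfolding lipschitz_around_def by blast
  obtain r where r: "r > 0" "ball x r \<subseteq> U" using l open_contains_ball by blast
  have "\<And>x'. x' \<in> ball x r \<Longrightarrow>
          G x' \<subseteq> {g + b | g b. g \<in> G x \<and> b \<in> cball 0 (l * norm (x' - x))}"
    using LU l(3) r(2) by blast
  with l(1) r(1) that show thesis using difference_quotient_near_tangent by blast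
qed

text \<open>Recession directions of a set of contingent-derivative values taken over a bounded
  set of directions are tangent to the fibre: rescaling by \<open>s \<rightarrow> 0\<close> kills the error
  \<open>l \<parallel>v\<parallel> \<le> l M\<close> of the previous lemma.\<close>
lemma recession_of_derivative_values_tangent:
  fixes G :: "'a::real_normed_vector \<Rightarrow> 'b::real_normed_vector set"
  assumes lip: "lipschitz_around G x" and M: "0 \<le> M"
    and B: "\<And>d. d \<in> B \<Longrightarrow> \<exists>v. norm v \<le> M \<and> d \<in> contingent_derivative G x y v"
  shows "recession_cone B \<subseteq> contingent_cone (G x) y"
proof
  obtain l where l: "l > 0"
    and quotient: "\<And>v w e. (v, w) \<in> contingent_cone (graph G) (x, y) \<Longrightarrow> 0 < e \<Longrightarrow>
           \<exists>t u. 0 < t \<and> t < e \<and> norm (u - w) \<le> l * norm v + e \<and> y + t *\<^sub>R u \<in> G x"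
    using lipschitz_difference_quotient[OF lip] by blast
  fix z assume z: "z \<in> recession_cone B"
  show "z \<in> contingent_cone (G x) y"
    unfolding contingent_cone_iff
  proof (intro allI impI)
    fix e :: real assume e: "0 < e"
    have lM: "0 \<le> l * M" using l M by simp
    define \<delta> where "\<delta> = min (e / 3) (e / (3 * (l * M + 1)))"
    have "0 < \<delta>" using e lM by (simp add: \<delta>_def)
    then obtain s d where sd: "0 < s" "s < \<delta>" "d \<in> B" "norm (s *\<^sub>R d - z) < \<delta>"
      using z unfolding recession_cone_iff by blast
    obtain v where v: "norm v \<le> M" "(v, d) \<in> contingent_cone (graph G) (x, y)"
      using B[OF sd(3)] by (auto simp: contingent_derivative_def)
    have "0 < min (e * s) 1" using e sd(1) by simp
    then obtain t u where tu: "0 < t" "t < min (e * s) 1"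
        "norm (u - d) \<le> l * norm v + min (e * s) 1" "y + t *\<^sub>R u \<in> G x"
      using quotient[OF v(2)] by blast
    have "l * norm v \<le> l * M" using v(1) l by (simp add: mult_left_mono)
    then have ud: "norm (u - d) \<le> l * M + 1" using tu(3) by linarith
    have "s \<le> e / (3 * (l * M + 1))" using sd(2) by (simp add: \<delta>_def)
    then have s_small: "s * (l * M + 1) \<le> e / 3" using lM by (simp add: field_simps)
    have "norm (s *\<^sub>R u - z) = norm (s *\<^sub>R (u - d) + (s *\<^sub>R d - z))"
      by (simp add: algebra_simps)
    also have "\<dots> \<le> s * norm (u - d) + norm (s *\<^sub>R d - z)"
      using norm_triangle_ineq[of "s *\<^sub>R (u - d)" "s *\<^sub>R d - z"] sd(1) by simp
    also have "s * norm (u - d) \<le> s * (l * M + 1)"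
      using ud sd(1) by (simp add: mult_left_mono)
    finally have "norm (s *\<^sub>R u - z) < e"
      using s_small sd(4) e by (simp add: \<delta>_def)
    moreover have "t / s < e" using tu(2) sd(1) by (simp add: divide_less_eq)
    moreover have "y + (t / s) *\<^sub>R (s *\<^sub>R u) = y + t *\<^sub>R u" using sd(1) by simp
    ultimately show "\<exists>t u. 0 < t \<and> t < e \<and> norm (u - z) < e \<and> y + t *\<^sub>R u \<in> G x"
      using tu(1,4) sd(1) by (intro exI[of _ "t / s"] exI[of _ "s *\<^sub>R u"]) auto
  qed
qed

theorem proposition6p7:
  fixes F :: "'a::real_normed_vector \<Rightarrow> 'b::euclidean_space set"
    and P :: "'b set" and x :: 'a and y :: 'b and S :: "('a \<times> 'b) set"
  assumes "ordering_cone P"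
    and "y \<in> F x"
    and "lipschitz_around F x"
    and "y \<in> proper_efficient (F x) P"
    and "S \<noteq> {}" and "compact S"
  shows "P_bounded (closure (\<Union>(v, w)\<in>S. (\<lambda>z. w + z) ` gen_contingent_epiderivative F P x y v)) P"
proof -
  let ?A = "\<Union>(v, w)\<in>S. (\<lambda>z. w + z) ` gen_contingent_epiderivative F P x y v"
  define B where "B = {d. \<exists>v w. (v, w) \<in> S \<and> d \<in> contingent_derivative (epi_map F P) x y v}"
  obtain M where M: "0 < M" "\<And>p. p \<in> S \<Longrightarrow> norm p \<le> M"
    using compact_imp_bounded[OF assms(6)] bounded_pos by blast
  have S_bound: "norm v \<le> M" "norm w \<le> M" if "(v, w) \<in> S" for v w
    using M(2)[OF that] norm_fst_le[of v w] norm_snd_le[of w v] by simp_all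
  have "recession_cone (closure ?A) \<subseteq> recession_cone ?A"
    by (rule recession_cone_closure_subset)
  also have "\<dots> \<subseteq> recession_cone B"
  proof (rule recession_cone_bounded_perturbation[of M])
    fix a assume "a \<in> ?A"
    then obtain v w d where "(v, w) \<in> S" "d \<in> gen_contingent_epiderivative F P x y v" "a = w + d"
      by blast
    then show "\<exists>w d. a = w + d \<and> norm w \<le> M \<and> d \<in> B"
      using S_bound unfolding B_def gen_contingent_epiderivative_def efficient_def by blast
  qed (use M(1) in simp)
  also have "\<dots> \<subseteq> contingent_cone (epi_map F P x) y"
    by (rule recession_of_derivative_values_tangent[OF lipschitz_around_epi_map[OF assms(3)], of M])
       (use M(1) S_bound in \<open>auto simp: B_def\<close>)
  finally have "recession_cone (closure ?A) \<subseteq> contingent_cone (epi_map F P x) y" .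
  moreover have "contingent_cone (epi_map F P x) y \<inter> uminus ` P = {0}"
    using assms(4) by (simp add: proper_efficient_def epi_map_def)
  ultimately show ?thesis unfolding P_bounded_def by blast
qed

end
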